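(* Let $F,G$ be completely multiplicative functions and $s=x+iy$ with $x,y\in\mathbb{R}$ such that $D(F,s)$ and $D(G,\overline{s})$ converge absolutely. Then \[D(F,s)\,D(G,\overline{s})=D(F\times G,2x)\,D\big(F_{y}\,\square\,G_{-y},\,x\big),\] where $F_y(n)=F(n)n^{-iy}$ and $G_{-y}(n)=G(n)n^{iy}$.
   Context: A completely multiplicative function is $F:\mathbb{N}^\star\to\mathbb{C}$ with $F(1)=1$ and $F(ab)=F(a)F(b)$ for all $a,b$. $D(F,s)=\sum_{n\ge1}F(n)n^{-s}$; $n^{it}=e^{it\ln n}$. $(F\times G)(n)=F(n)G(n)$, and $(F\,\square\,G)(m)=\sum_{ab=m,\ \gcd(a,b)=1}F(a)G(b)$ (unitary convolution). *)

theory Defs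
  imports "HOL-Analysis.Analysis"
begin

text \<open>Completely multiplicative arithmetic functions on the positive integers
  (values at 0 are irrelevant).\<close>
definition completely_multiplicative :: "(nat \<Rightarrow> complex) \<Rightarrow> bool" where
  "completely_multiplicative F \<longleftrightarrow>
     F 1 = 1 \<and> (\<forall>a b. 0 < a \<longrightarrow> 0 < b \<longrightarrow> F (a * b) = F a * F b)"

definition dir_term :: "(nat \<Rightarrow> complex) \<Rightarrow> complex \<Rightarrow> nat \<Rightarrow> complex" where
  "dir_term F s n = F n * (of_nat n) powr (- s)"

definition dirichlet_series :: "(nat \<Rightarrow> complex) \<Rightarrow> complex \<Rightarrow> complex" where
  "dirichlet_series F s = (\<Sum>n. dir_term F s (Suc n))"

definition abs_conv_dirichlet :: "(nat \<Rightarrow> complex) \<Rightarrow> complex \<Rightarrow> bool" where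
  "abs_conv_dirichlet F s \<longleftrightarrow> summable (\<lambda>n. norm (dir_term F s (Suc n)))"

definition pmult :: "(nat \<Rightarrow> complex) \<Rightarrow> (nat \<Rightarrow> complex) \<Rightarrow> nat \<Rightarrow> complex" where
  "pmult F G n = F n * G n"

definition unitary_conv :: "(nat \<Rightarrow> complex) \<Rightarrow> (nat \<Rightarrow> complex) \<Rightarrow> nat \<Rightarrow> complex" where
  "unitary_conv F G m = (\<Sum>a\<in>{a. a dvd m \<and> coprime a (m div a)}. F a * G (m div a))"

definition twist :: "(nat \<Rightarrow> complex) \<Rightarrow> real \<Rightarrow> nat \<Rightarrow> complex" where
  "twist F t n = F n * (of_nat n) powr (- (\<i> * complex_of_real t))"

end

theory Submission imports Defs begin

text \<open>Since F and G are completely multiplicative, the term of D(F,s) D(G,t) at a pair (a,b)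
  factors through d = gcd(a,b): writing a = d u and b = d v with u, v coprime, it equals
  F(d)G(d) d^(-(s+t)) times the term at (u,v). By absolute convergence the double sum therefore
  splits as D(F G, s+t) times the sum over coprime pairs. For s = x+iy and t = x-iy the term at a
  coprime pair (u,v) is F_y(u) G_{-y}(v) (uv)^(-x), and grouping coprime pairs by m = uv yields
  exactly the unitary convolution of F_y and G_{-y} at m.\<close>

definition coprime_pairs :: "(nat \<times> nat) set" where
  "coprime_pairs = {(u, v). 0 < u \<and> 0 < v \<and> coprime u v}"

lemma has_sum_product_complex:
  fixes f :: "'a \<Rightarrow> complex" and g :: "'b \<Rightarrow> complex"
  assumes f: "(f has_sum S) A" and g: "(g has_sum T) B"
  shows "((\<lambda>(a, b). f a * g b) has_sum S * T) (A \<times> B)"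
proof -
  have af: "(\<lambda>a. norm (f a)) summable_on A" and ag: "(\<lambda>b. norm (g b)) summable_on B"
    using f g summable_on_iff_abs_summable_on_complex by (auto simp: summable_on_def)
  have "(\<lambda>z. norm ((\<lambda>(a, b). f a * g b) z)) summable_on A \<times> B"
  proof (subst Infinite_Sum.abs_summable_on_Sigma_iff, intro conjI ballI)
    fix a assume "a \<in> A"
    show "(\<lambda>b. norm (case (a, b) of (a, b) \<Rightarrow> f a * g b)) summable_on B"
      using summable_on_cmult_right[OF ag, of "norm (f a)"] by (simp add: norm_mult)
  next
    have "norm (\<Sum>\<^sub>\<infinity>b\<in>B. norm (case (a, b) of (a, b) \<Rightarrow> f a * g b))
          = norm (f a) * (\<Sum>\<^sub>\<infinity>b\<in>B. norm (g b))" for a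
      by (simp add: norm_mult infsum_cmult_right' infsum_nonneg)
    then show "(\<lambda>a. norm (\<Sum>\<^sub>\<infinity>b\<in>B. norm (case (a, b) of (a, b) \<Rightarrow> f a * g b)))
               summable_on A"
      using summable_on_cmult_left[OF af] by simp
  qed
  then have summable: "(\<lambda>(a, b). f a * g b) summable_on A \<times> B"
    using summable_on_iff_abs_summable_on_complex by blast
  have "infsum (\<lambda>(a, b). f a * g b) (A \<times> B) = (\<Sum>\<^sub>\<infinity>a\<in>A. \<Sum>\<^sub>\<infinity>b\<in>B. f a * g b)"
    using infsum_Sigma_banach[OF summable] by simp
  also have "\<dots> = S * T"
    using f g by (simp add: infsum_cmult_right' infsum_cmult_left' infsumI)
  finally show ?thesis
    using summable by (simp add: has_sum_iff)
qed

lemma has_sum_Suc_iff: "((\<lambda>n. h (Suc n)) has_sum S) UNIV \<longleftrightarrow> (h has_sum S) {0<..}"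
proof -
  have "range Suc = {0<..}"
    by (auto simp: image_iff gr0_conv_Suc)
  then show ?thesis
    using has_sum_reindex[of Suc UNIV h] by (simp add: o_def)
qed

lemma dirichlet_series_has_sum:
  assumes "abs_conv_dirichlet F s"
  shows "(dir_term F s has_sum dirichlet_series F s) {0<..}"
proof -
  have norm: "summable (\<lambda>n. norm (dir_term F s (Suc n)))"
    using assms unfolding abs_conv_dirichlet_def .
  then have "(\<lambda>n. dir_term F s (Suc n)) sums dirichlet_series F s"
    unfolding dirichlet_series_def by (rule summable_sums[OF summable_norm_cancel])
  with norm have "((\<lambda>n. dir_term F s (Suc n)) has_sum dirichlet_series F s) UNIV"
    by (rule norm_summable_imp_has_sum)
  then show ?thesis
    by (simp only: has_sum_Suc_iff)
qed

lemma dirichlet_series_eqI: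
  assumes "(dir_term F s has_sum S) {0<..}"
  shows "dirichlet_series F s = S"
proof -
  have "((\<lambda>n. dir_term F s (Suc n)) has_sum S) UNIV"
    using assms by (simp only: has_sum_Suc_iff)
  then have "(\<lambda>n. dir_term F s (Suc n)) sums S"
    by (rule has_sum_imp_sums)
  then show ?thesis
    unfolding dirichlet_series_def by (rule sums_unique[symmetric])
qed

lemma of_nat_mult_powr: "(of_nat (a * b) :: complex) powr z = of_nat a powr z * of_nat b powr z"
  unfolding of_nat_mult by (rule powr_times_real) auto

lemma dir_term_mult:
  assumes "completely_multiplicative F" and "0 < a" and "0 < b"
  shows "dir_term F s (a * b) = dir_term F s a * dir_term F s b"
  using assms unfolding dir_term_def completely_multiplicative_def of_nat_mult_powr
  by simp

lemma dir_term_pmult: "dir_term (pmult F G) (s + t) n = dir_term F s n * dir_term G t n"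
  unfolding dir_term_def pmult_def minus_add_distrib powr_add by simp

lemma dir_term_twist: "dir_term (twist F t) s n = dir_term F (s + \<i> * of_real t) n"
  unfolding dir_term_def twist_def minus_add_distrib powr_add by simp

lemma dir_term_unitary_conv:
  assumes "0 < m"
  shows "dir_term (unitary_conv F G) s m =
         (\<Sum>a | a dvd m \<and> coprime a (m div a). dir_term F s a * dir_term G s (m div a))"
  unfolding dir_term_def unitary_conv_def sum_distrib_right
proof (rule sum.cong)
  fix a assume "a \<in> {a. a dvd m \<and> coprime a (m div a)}"
  then have "of_nat m powr (- s) = of_nat a powr (- s) * of_nat (m div a) powr (- s)"
    by (simp flip: of_nat_mult_powr)
  then show "F a * G (m div a) * of_nat m powr - s
             = F a * of_nat a powr - s * (G (m div a) * of_nat (m div a) powr - s)"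
    by simp
qed simp

lemma has_sum_gcd_reindex:
  fixes q :: "nat \<times> nat \<Rightarrow> 'a :: topological_comm_monoid_add"
  shows "((\<lambda>(d, u, v). q (d * u, d * v)) has_sum S) ({0<..} \<times> coprime_pairs) \<longleftrightarrow>
   (q has_sum S) ({0<..} \<times> {0<..})"
proof (rule has_sum_reindex_bij_witness[where j = "\<lambda>(d, u, v). (d * u, d * v)"
      and i = "\<lambda>(a, b). (gcd a b, a div gcd a b, b div gcd a b)"])
  fix z :: "nat \<times> nat \<times> nat" assume "z \<in> {0<..} \<times> coprime_pairs"
  then obtain d u v where z: "z = (d, u, v)" "0 < d" "0 < u" "0 < v" "coprime u v"
    by (auto simp: coprime_pairs_def)
  then have "gcd (d * u) (d * v) = d"
    by (simp flip: gcd_mult_distrib_nat)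
  with z show "(\<lambda>(a, b). (gcd a b, a div gcd a b, b div gcd a b))
                 ((\<lambda>(d, u, v). (d * u, d * v)) z) = z"
    by simp
  show "(\<lambda>(d, u, v). (d * u, d * v)) z \<in> {0<..} \<times> {0<..}"
    using z by simp
next
  fix z :: "nat \<times> nat" assume "z \<in> {0<..} \<times> {0<..}"
  then obtain a b where z: "z = (a, b)" "0 < a" "0 < b"
    by auto
  then have "0 < gcd a b" "0 < a div gcd a b" "0 < b div gcd a b"
    by (auto simp: div_greater_zero_iff)
  moreover have "coprime (a div gcd a b) (b div gcd a b)"
    using z by (intro div_gcd_coprime) auto
  ultimately show "(\<lambda>(a, b). (gcd a b, a div gcd a b, b div gcd a b)) z
                     \<in> {0<..} \<times> coprime_pairs"
    using z by (simp add: coprime_pairs_def)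
  show "(\<lambda>(d, u, v). (d * u, d * v)) ((\<lambda>(a, b). (gcd a b, a div gcd a b, b div gcd a b)) z)
          = z"
    using z by simp
qed auto

lemma has_sum_coprime_pairs_by_product:
  fixes r :: "nat \<times> nat \<Rightarrow> 'a :: {topological_comm_monoid_add, t3_space}"
  assumes "(r has_sum S) coprime_pairs"
  shows "((\<lambda>m. \<Sum>a | a dvd m \<and> coprime a (m div a). r (a, m div a)) has_sum S) {0<..}"
proof -
  define D where "D m = {a. a dvd m \<and> coprime a (m div a)}" for m :: nat
  have "(r has_sum S) coprime_pairs \<longleftrightarrow>
        ((\<lambda>(m, a). r (a, m div a)) has_sum S) (Sigma {0<..} D)"
  proof (rule has_sum_reindex_bij_witness[where j = "\<lambda>(u, v). (u * v, u)"
        and i = "\<lambda>(m, a). (a, m div a)"])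
    fix z assume "z \<in> coprime_pairs"
    then obtain u v where z: "z = (u, v)" "0 < u" "0 < v" "coprime u v"
      by (auto simp: coprime_pairs_def)
    then show "(\<lambda>(m, a). (a, m div a)) ((\<lambda>(u, v). (u * v, u)) z) = z"
      and "(\<lambda>(u, v). (u * v, u)) z \<in> Sigma {0<..} D"
      and "(\<lambda>(m, a). r (a, m div a)) ((\<lambda>(u, v). (u * v, u)) z) = r z"
      by (simp_all add: D_def)
  next
    fix z :: "nat \<times> nat" assume "z \<in> Sigma {0<..} D"
    then obtain m a where z: "z = (m, a)" "0 < m" "a dvd m" "coprime a (m div a)"
      by (auto simp: D_def)
    then have "0 < a" "0 < m div a"
      by (auto simp: div_greater_zero_iff dest: dvd_imp_le intro: gr0I)
    with z show "(\<lambda>(m, a). (a, m div a)) z \<in> coprime_pairs"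
      by (simp add: coprime_pairs_def)
    show "(\<lambda>(u, v). (u * v, u)) ((\<lambda>(m, a). (a, m div a)) z) = z"
      using z by simp
  qed auto
  with assms have Sigma: "((\<lambda>(m, a). r (a, m div a)) has_sum S) (Sigma {0<..} D)"
    by blast
  have finite: "finite (D m)" for m
    by (cases "m = 0")
       (auto simp: D_def intro: finite_subset[of _ "{..m}"] dest: dvd_imp_le)
  show ?thesis
    unfolding D_def[symmetric]
    by (rule has_sum_SigmaD[OF Sigma]) (use finite in \<open>auto intro: has_sum_finiteI\<close>)
qed

lemma dir_term_products_summable_on_coprime_pairs:
  assumes "abs_conv_dirichlet F s" and "abs_conv_dirichlet G t"
  shows "(\<lambda>(u, v). dir_term F s u * dir_term G t v) summable_on coprime_pairs"
proof (rule summable_on_subset_banach)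
  show "(\<lambda>(u, v). dir_term F s u * dir_term G t v) summable_on {0<..} \<times> {0<..}"
    using has_sum_product_complex[OF assms[THEN dirichlet_series_has_sum]]
    by (auto simp: summable_on_def)
qed (auto simp: coprime_pairs_def)

lemma dirichlet_series_mult_eq_coprime_pairs:
  assumes F: "completely_multiplicative F" and G: "completely_multiplicative G"
    and conv: "abs_conv_dirichlet F s" "abs_conv_dirichlet G t"
  shows "dirichlet_series F s * dirichlet_series G t =
         dirichlet_series (pmult F G) (s + t) *
         (\<Sum>\<^sub>\<infinity>(u, v)\<in>coprime_pairs. dir_term F s u * dir_term G t v)"
proof -
  define P where "P = ({0<..} :: nat set)"
  define q where "q = (\<lambda>(u, v). dir_term F s u * dir_term G t v)"
  define h where "h = dir_term (pmult F G) (s + t)"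
  have "(q has_sum dirichlet_series F s * dirichlet_series G t) (P \<times> P)"
    unfolding q_def P_def using has_sum_product_complex conv[THEN dirichlet_series_has_sum] .
  then have "((\<lambda>(d, u, v). q (d * u, d * v)) has_sum dirichlet_series F s * dirichlet_series G t)
               (P \<times> coprime_pairs)"
    unfolding P_def by (simp add: has_sum_gcd_reindex)
  also have "?this \<longleftrightarrow> ((\<lambda>(d, w). h d * q w) has_sum dirichlet_series F s * dirichlet_series G t)
               (P \<times> coprime_pairs)"
    by (intro has_sum_cong)
       (auto simp: P_def coprime_pairs_def q_def h_def dir_term_mult[OF F] dir_term_mult[OF G]
          dir_term_pmult)
  finally have split: "\<dots>" .
  have diagonal: "h = (\<lambda>d. q (d, d))"
    by (simp add: fun_eq_iff q_def h_def dir_term_pmult)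
  have "q summable_on (\<lambda>d. (d, d)) ` P"
    by (rule summable_on_subset_banach[of _ "P \<times> P"])
       (use \<open>(q has_sum _) (P \<times> P)\<close> in \<open>auto simp: summable_on_def\<close>)
  then have h: "h summable_on P"
    unfolding diagonal by (subst (asm) summable_on_reindex) (auto simp: inj_on_def o_def)
  have "q summable_on coprime_pairs"
    unfolding q_def using conv by (rule dir_term_products_summable_on_coprime_pairs)
  with h have "((\<lambda>(d, w). h d * q w) has_sum infsum h P * infsum q coprime_pairs)
                 (P \<times> coprime_pairs)"
    by (intro has_sum_product_complex has_sum_infsum)
  with split have "dirichlet_series F s * dirichlet_series G t = infsum h P * infsum q coprime_pairs"
    by (rule has_sum_unique)
  moreover have "dirichlet_series (pmult F G) (s + t) = infsum h P"
    using h unfolding P_def h_def by (intro dirichlet_series_eqI has_sum_infsum)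
  ultimately show ?thesis
    by (simp add: q_def)
qed

lemma dirichlet_series_unitary_conv:
  assumes "(\<lambda>(u, v). dir_term F s u * dir_term G s v) summable_on coprime_pairs"
  shows "dirichlet_series (unitary_conv F G) s =
         (\<Sum>\<^sub>\<infinity>(u, v)\<in>coprime_pairs. dir_term F s u * dir_term G s v)"
proof (rule dirichlet_series_eqI)
  have "((\<lambda>m. \<Sum>a | a dvd m \<and> coprime a (m div a). dir_term F s a * dir_term G s (m div a))
          has_sum (\<Sum>\<^sub>\<infinity>(u, v)\<in>coprime_pairs. dir_term F s u * dir_term G s v)) {0<..}"
    using has_sum_coprime_pairs_by_product[OF has_sum_infsum[OF assms]] by simp
  then show "(dir_term (unitary_conv F G) s has_sum
               (\<Sum>\<^sub>\<infinity>(u, v)\<in>coprime_pairs. dir_term F s u * dir_term G s v)) {0<..}"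
    by (rule has_sum_cong[THEN iffD1, rotated]) (simp add: dir_term_unitary_conv)
qed

theorem mainTheorem13:
  fixes F G :: "nat \<Rightarrow> complex" and x y :: real
  assumes "completely_multiplicative F" and "completely_multiplicative G"
    and "abs_conv_dirichlet F (Complex x y)"
    and "abs_conv_dirichlet G (cnj (Complex x y))"
  shows "dirichlet_series F (Complex x y) * dirichlet_series G (cnj (Complex x y)) =
         dirichlet_series (pmult F G) (complex_of_real (2 * x)) *
         dirichlet_series (unitary_conv (twist F y) (twist G (- y))) (complex_of_real x)"
proof -
  have "Complex x y = of_real x + \<i> * of_real y"
    and "cnj (Complex x y) = of_real x + \<i> * of_real (- y)"
    by (simp_all add: complex_eq_iff)
  then have twisted: "dir_term F (Complex x y) = dir_term (twist F y) (of_real x)"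
    "dir_term G (cnj (Complex x y)) = dir_term (twist G (- y)) (of_real x)"
    by (simp_all add: fun_eq_iff dir_term_twist)
  have "Complex x y + cnj (Complex x y) = of_real (2 * x)"
    by (simp add: complex_eq_iff)
  moreover have "(\<lambda>(u, v). dir_term (twist F y) (of_real x) u *
                            dir_term (twist G (- y)) (of_real x) v) summable_on coprime_pairs"
    using dir_term_products_summable_on_coprime_pairs[OF assms(3,4)] by (simp add: twisted)
  ultimately show ?thesis
    using dirichlet_series_mult_eq_coprime_pairs[OF assms] dirichlet_series_unitary_conv
    by (simp add: twisted)
qed

end
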